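(* Let $d\ge2$, $n\ge1$, $k=\lfloor d/2\rfloor$, let $(p_1,\dots,p_n)\in V(I_{d,n})$ and let $z_1,\dots,z_n\in\mathbb{C}^{2^k}$ be arbitrary. Then: (a) the $n\times n$ matrix $S=(\langle ij\rangle)_{i,j}$ has rank $\le 2^k$ and zero diagonal; $S$ is symmetric if $k\equiv0,3\pmod4$ and skew symmetric otherwise; (b) for each $j$, the $n\times n$ matrix $T_j=(\langle ijk\rangle)_{i,k}$ has rank $\le 2^{k-1}$ and its $j$-th row and $j$-th column are zero (i.e. $\langle jjk\rangle=\langle ijj\rangle=0$); $T_j$ is symmetric if $d\equiv1,2,3,4\pmod8$ and skew symmetric otherwise; (c) $T_1+T_2+\cdots+T_n=0$.
   Context: $x\cdot y=-x_1y_1+x_2y_2+\cdots+x_dy_d$; $V(I_{d,n})\subset(\mathbb{C}^d)^n$ is the set of tuples $(p_1,\dots,p_n)$ with $p_i\cdot p_i=0$ for all $i$ and $\sum_i p_i=0$. Dirac matrices $\Gamma_1,\dots,\Gamma_d$ ($2^k\times2^k$): for $d=2$, $\Gamma_1=\begin{pmatrix}0&1\\-1&0\end{pmatrix}$, $\Gamma_2=\begin{pmatrix}0&1\\1&0\end{pmatrix}$; for even $d=2k\ge4$, with $\Gamma'_j$ those for $d-2$ and $\otimes$ the Kronecker product, $\Gamma_j=\Gamma'_j\otimes\mathrm{diag}(-1,1)$ ($j\le d-2$), $\Gamma_{d-1}=\mathrm{Id}_{2^{k-1}}\otimes\begin{pmatrix}0&1\\1&0\end{pmatrix}$, $\Gamma_d=\mathrm{Id}_{2^{k-1}}\otimes\begin{pmatrix}0&-i\\i&0\end{pmatrix}$;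 for odd $d=2k+1$, $\Gamma_1,\dots,\Gamma_{2k}$ as for $2k$ and $\Gamma_d=-i^{k-1}\Gamma_1\cdots\Gamma_{2k}$. Put $\Gamma_{2k+1}:=-i^{k-1}\Gamma_1\cdots\Gamma_{2k}$. Charge conjugation matrix: $C=\Gamma_{2k+1}\Gamma_4\Gamma_6\cdots\Gamma_{2k}\Gamma_1$ if $d\equiv0\pmod4$, $C=\Gamma_4\Gamma_6\cdots\Gamma_{2k}\Gamma_1$ otherwise ($C=\Gamma_1$ for $k=1$). For $i=1,\dots,n$ let $P_i=-p_{i1}\Gamma_1+p_{i2}\Gamma_2+\cdots+p_{id}\Gamma_d$ and $|i\rangle=P_iz_i\in\mathbb{C}^{2^k}$. Spinor brackets: $\langle ij\rangle=|i\rangle^TC|j\rangle$ and $\langle ijk\rangle=|i\rangle^TCP_j|k\rangle$. *)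

theory Defs
  imports Complex_Main "Jordan_Normal_Form.Matrix" "Jordan_Normal_Form.DL_Rank"
begin

definition kron :: "complex mat \<Rightarrow> complex mat \<Rightarrow> complex mat" where
  "kron A B = mat (dim_row A * dim_row B) (dim_col A * dim_col B)
     (\<lambda>(i,j). A $$ (i div dim_row B, j div dim_col B) * B $$ (i mod dim_row B, j mod dim_col B))"

definition mat2 :: "complex \<Rightarrow> complex \<Rightarrow> complex \<Rightarrow> complex \<Rightarrow> complex mat" where
  "mat2 a b c e = mat_of_rows_list 2 [[a, b], [c, e]]"

(* gamma_even k j : Dirac matrix Gamma_j (j = 1..2k) for d = 2k, k >= 1; a 2^k x 2^k matrix *)
fun gamma_even :: "nat \<Rightarrow> nat \<Rightarrow> complex mat" where
  "gamma_even 0 j = 1\<^sub>m 1"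
| "gamma_even (Suc 0) j = (if j = 1 then mat2 0 1 (-1) 0 else mat2 0 1 1 0)"
| "gamma_even (Suc (Suc k)) j =
     (if j \<le> 2 * Suc k then kron (gamma_even (Suc k) j) (mat2 (-1) 0 0 1)
      else if j = 2 * Suc k + 1 then kron (1\<^sub>m (2 ^ Suc k)) (mat2 0 1 1 0)
      else kron (1\<^sub>m (2 ^ Suc k)) (mat2 0 (-\<i>) \<i> 0))"

definition mat_prod_list :: "nat \<Rightarrow> complex mat list \<Rightarrow> complex mat" where
  "mat_prod_list N Ms = foldr (*) Ms (1\<^sub>m N)"

definition gamma_top :: "nat \<Rightarrow> complex mat" where
  "gamma_top k = (- (\<i> ^ (k - 1))) \<cdot>\<^sub>m
     mat_prod_list (2 ^ k) (map (gamma_even k) [1..<2 * k + 1])"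

definition dirac :: "nat \<Rightarrow> nat \<Rightarrow> complex mat" where
  "dirac d j = (if j \<le> 2 * (d div 2) then gamma_even (d div 2) j else gamma_top (d div 2))"

definition charge_conj :: "nat \<Rightarrow> complex mat" where
  "charge_conj d = (let k = d div 2;
      G = mat_prod_list (2 ^ k) (map (\<lambda>m. gamma_even k (2 * m)) [2..<k + 1]) * gamma_even k 1
    in if d mod 4 = 0 then gamma_top k * G else G)"

definition mdot :: "nat \<Rightarrow> (nat \<Rightarrow> complex) \<Rightarrow> (nat \<Rightarrow> complex) \<Rightarrow> complex" where
  "mdot d x y = - x 1 * y 1 + (\<Sum>j = 2..d. x j * y j)"

(* (p_1,...,p_n) \<in> V(I_{d,n}); p i j is the j-th coordinate of p_i *)
definition in_V :: "nat \<Rightarrow> nat \<Rightarrow> (nat \<Rightarrow> nat \<Rightarrow> complex) \<Rightarrow> bool" where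
  "in_V d n p \<longleftrightarrow> (\<forall>i\<in>{1..n}. mdot d (p i) (p i) = 0) \<and> (\<forall>j\<in>{1..d}. (\<Sum>i = 1..n. p i j) = 0)"

definition slashP :: "nat \<Rightarrow> (nat \<Rightarrow> complex) \<Rightarrow> complex mat" where
  "slashP d x = (- x 1) \<cdot>\<^sub>m dirac d 1
     + foldr (+) (map (\<lambda>j. x j \<cdot>\<^sub>m dirac d j) [2..<d + 1]) (0\<^sub>m (2 ^ (d div 2)) (2 ^ (d div 2)))"

definition ket :: "nat \<Rightarrow> (nat \<Rightarrow> complex) \<Rightarrow> complex vec \<Rightarrow> complex vec" where
  "ket d x z = slashP d x *\<^sub>v z"

definition br2 :: "nat \<Rightarrow> (nat \<Rightarrow> nat \<Rightarrow> complex) \<Rightarrow> (nat \<Rightarrow> complex vec) \<Rightarrow> nat \<Rightarrow> nat \<Rightarrow> complex" where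
  "br2 d p z i j = ket d (p i) (z i) \<bullet> (charge_conj d *\<^sub>v ket d (p j) (z j))"

definition br3 :: "nat \<Rightarrow> (nat \<Rightarrow> nat \<Rightarrow> complex) \<Rightarrow> (nat \<Rightarrow> complex vec) \<Rightarrow> nat \<Rightarrow> nat \<Rightarrow> nat \<Rightarrow> complex" where
  "br3 d p z i j k = ket d (p i) (z i) \<bullet> (charge_conj d *\<^sub>v (slashP d (p j) *\<^sub>v ket d (p k) (z k)))"

(* S = (<ij>)_{i,j=1..n}, stored 0-based *)
definition Smat :: "nat \<Rightarrow> nat \<Rightarrow> (nat \<Rightarrow> nat \<Rightarrow> complex) \<Rightarrow> (nat \<Rightarrow> complex vec) \<Rightarrow> complex mat" where
  "Smat d n p z = mat n n (\<lambda>(a, b). br2 d p z (a + 1) (b + 1))"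

(* T_j = (<ijk>)_{i,k=1..n}, stored 0-based *)
definition Tmat :: "nat \<Rightarrow> nat \<Rightarrow> (nat \<Rightarrow> nat \<Rightarrow> complex) \<Rightarrow> (nat \<Rightarrow> complex vec) \<Rightarrow> nat \<Rightarrow> complex mat" where
  "Tmat d n p z j = mat n n (\<lambda>(a, b). br3 d p z (a + 1) j (b + 1))"

abbreviation mrank :: "nat \<Rightarrow> complex mat \<Rightarrow> nat" where
  "mrank n M \<equiv> vec_space.rank n (M :: complex mat)"

end

theory Submission
  imports Defs "Jordan_Normal_Form.Matrix_Kernel"
begin

text \<open>The Dirac matrices are built recursively by Kronecker products with Pauli matrices, so
  induction on \<open>k = \<lfloor>d/2\<rfloor>\<close> yields the Clifford relations
  \<open>\<Gamma>\<^sub>a\<Gamma>\<^sub>b + \<Gamma>\<^sub>b\<Gamma>\<^sub>a = 2\<eta>\<^sub>a\<^sub>b\<close>, the symmetry \<open>C\<^sup>T = \<sigma> C\<close> of the charge conjugation matrix and the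
  twisted symmetry \<open>\<Gamma>\<^sub>a\<^sup>T C = \<epsilon> C \<Gamma>\<^sub>a\<close>, with signs \<open>\<sigma>, \<epsilon> = \<plusminus>1\<close> depending on \<open>d\<close>. Consequently
  \<open>P\<^sub>i\<^sup>2 = p\<^sub>i\<cdot>p\<^sub>i = 0\<close> and \<open>P\<^sub>i\<^sup>T C = \<epsilon> C P\<^sub>i\<close>, which gives the (skew) symmetry of \<open>\<langle>ij\<rangle>\<close> and
  \<open>\<langle>ijk\<rangle>\<close> and the vanishing of \<open>\<langle>ii\<rangle> = z\<^sub>i\<^sup>T P\<^sub>i\<^sup>T C P\<^sub>i z\<^sub>i\<close>, \<open>\<langle>jjk\<rangle>\<close> and \<open>\<langle>ijj\<rangle>\<close>. Writing \<open>K\<close> for the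
  \<open>n \<times> 2\<^sup>k\<close> matrix with rows \<open>|i\<rangle>\<close>, one has \<open>S = K C K\<^sup>T\<close> and \<open>T\<^sub>j = K C P\<^sub>j K\<^sup>T\<close>; the rank bounds follow
  since \<open>P\<^sub>j\<^sup>2 = 0\<close> forces \<open>rank P\<^sub>j \<le> 2\<^sup>k\<^sup>-\<^sup>1\<close>. Finally \<open>\<langle>ijk\<rangle>\<close> is linear in \<open>p\<^sub>j\<close>, and momentum
  conservation gives \<open>\<Sum>\<^sub>j T\<^sub>j = 0\<close>.\<close>


lemma smult_smult_mat [simp]: "a \<cdot>\<^sub>m (b \<cdot>\<^sub>m A) = (a * b) \<cdot>\<^sub>m (A :: 'a::semigroup_mult mat)"
  by (rule eq_matI) (auto simp: mult.assoc)

lemma one_smult_mat [simp]: "(1 :: 'a::monoid_mult) \<cdot>\<^sub>m A = A"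
  by (rule eq_matI) auto

lemma zero_smult_mat [simp]: "(0 :: 'a::mult_zero) \<cdot>\<^sub>m A = 0\<^sub>m (dim_row A) (dim_col A)"
  by (rule eq_matI) auto

lemma uminus_eq_smult_mat: "- (A :: 'a::ring_1 mat) = (-1) \<cdot>\<^sub>m A"
  by (rule eq_matI) auto

lemma transpose_smult_mat: "transpose_mat (c \<cdot>\<^sub>m A) = c \<cdot>\<^sub>m transpose_mat A"
  by (rule eq_matI) auto

lemma eq_uminus_if_add_eq_zero_mat:
  assumes "X \<in> carrier_mat n m" "Y \<in> carrier_mat n m" "Y + X = 0\<^sub>m n m"
  shows "X = - (Y :: 'a::ab_group_add mat)"
proof (rule eq_matI)
  fix i j assume "i < dim_row (- Y)" "j < dim_col (- Y)"
  moreover from this have "(Y + X) $$ (i, j) = 0\<^sub>m n m $$ (i, j)"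
    using assms(3) by simp
  ultimately show "X $$ (i, j) = (- Y) $$ (i, j)"
    using assms(1,2) by (simp add: add_eq_0_iff)
qed (use assms in auto)

lemma eq_smult_one_mat_if_double:
  assumes "X \<in> carrier_mat n n" and "X + X = (2 * c) \<cdot>\<^sub>m 1\<^sub>m n"
  shows "X = (c :: 'a::field_char_0) \<cdot>\<^sub>m 1\<^sub>m n"
proof (rule eq_matI)
  fix i j assume "i < dim_row (c \<cdot>\<^sub>m 1\<^sub>m n)" "j < dim_col (c \<cdot>\<^sub>m 1\<^sub>m n)"
  moreover from this have "(X + X) $$ (i, j) = ((2 * c) \<cdot>\<^sub>m 1\<^sub>m n) $$ (i, j)"
    using assms(2) by simp
  ultimately show "X $$ (i, j) = (c \<cdot>\<^sub>m 1\<^sub>m n) $$ (i, j)"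
    using assms(1) by (auto split: if_splits)
qed (use assms in auto)

lemma square_add_mat:
  assumes A: "A \<in> carrier_mat n n" and B: "B \<in> carrier_mat n n"
  shows "(A + B) * (A + B) = A * A + (A * B + B * A) + B * (B :: 'a::semiring_0 mat)"
proof -
  have "(A + B) * (A + B) = A * (A + B) + B * (A + B)"
    by (rule add_mult_distrib_mat[OF A B add_carrier_mat[OF B]])
  also have "\<dots> = (A * A + A * B) + (B * A + B * B)"
    using mult_add_distrib_mat[OF A A B] mult_add_distrib_mat[OF B A B] by simp
  also have "\<dots> = A * A + (A * B + B * A) + B * B"
    using A B by (simp add: assoc_add_mat[of _ n n])
  finally show ?thesis .
qed

lemma anticomm_smult_add_mat:
  assumes A: "A \<in> carrier_mat n n" and B: "B \<in> carrier_mat n n" and Q: "Q \<in> carrier_mat n n"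
  shows "A * (c \<cdot>\<^sub>m B + Q) + (c \<cdot>\<^sub>m B + Q) * A = c \<cdot>\<^sub>m (A * B + B * A) + (A * Q + Q * A :: 'a::comm_ring mat)"
proof -
  have "A * (c \<cdot>\<^sub>m B + Q) + (c \<cdot>\<^sub>m B + Q) * A = (c \<cdot>\<^sub>m (A * B) + A * Q) + (c \<cdot>\<^sub>m (B * A) + Q * A)"
    using mult_add_distrib_mat[OF A smult_carrier_mat[OF B] Q] add_mult_distrib_mat[OF smult_carrier_mat[OF B] Q A]
      mult_smult_distrib[OF A B] mult_smult_assoc_mat[OF B A] by simp
  also have "\<dots> = c \<cdot>\<^sub>m (A * B + B * A) + (A * Q + Q * A)"
    using A B Q by (intro eq_matI) (auto simp: algebra_simps)
  finally show ?thesis .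
qed

lemma zero_mat_mult_vec [simp]: "v \<in> carrier_vec nc \<Longrightarrow> 0\<^sub>m nr nc *\<^sub>v v = 0\<^sub>v nr"
  by (rule eq_vecI) (auto simp: scalar_prod_def)

lemma mult_zero_vec_mat [simp]: "A \<in> carrier_mat nr nc \<Longrightarrow> A *\<^sub>v 0\<^sub>v nc = 0\<^sub>v nr"
  by (rule eq_vecI) auto

lemma smult_mat_mult_vec:
  "A \<in> carrier_mat nr nc \<Longrightarrow> v \<in> carrier_vec nc \<Longrightarrow> (c \<cdot>\<^sub>m A) *\<^sub>v v = c \<cdot>\<^sub>v (A *\<^sub>v (v :: 'a::comm_ring vec))"
  by (rule eq_vecI) (auto simp: scalar_prod_def sum_distrib_left ac_simps)

lemma scalar_prod_mult_mat_vec_swap: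
  assumes "u \<in> carrier_vec n" "w \<in> carrier_vec n" "M \<in> carrier_mat n n"
  shows "u \<bullet> (M *\<^sub>v w) = w \<bullet> (transpose_mat M *\<^sub>v (u :: 'a::comm_semiring_0 vec))"
  using transpose_vec_mult_scalar[OF assms(3,2,1)] comm_scalar_prod[of w n "transpose_mat M *\<^sub>v u"] assms
  by simp


section \<open>Rank\<close>

lemma (in vectorspace) dim_le_of_subspace:
  assumes X: "subspace K X V" and Y: "subspace K Y V" and "X \<subseteq> Y"
    and "vectorspace.fin_dim K (vs X)" and fin_Y: "vectorspace.fin_dim K (vs Y)"
  shows "vectorspace.dim K (vs X) \<le> vectorspace.dim K (vs Y)"
proof -
  interpret W: vectorspace K "vs Y" by (rule subspace_is_vs[OF Y])
  have "subspace K X (vs Y)" by (rule nested_subspaces[OF Y X \<open>X \<subseteq> Y\<close>])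
  with W.subspace_dim[OF this fin_Y] assms(4) show ?thesis by simp
qed

context vec_space begin

lemma span_cols_eq_image:
  assumes A: "A \<in> carrier_mat n m"
  shows "span (set (cols A)) = (\<lambda>v. A *\<^sub>v v) ` carrier_vec m"
proof -
  have dims: "\<forall>w\<in>set (cols A). dim_vec w = n" using A cols_dim[of A] by auto
  have "span (set (cols A)) = span_list (cols A)"
    using span_list_as_span[of "cols A"] A cols_dim[of A] by auto
  also have "\<dots> = range (\<lambda>c. A *\<^sub>v vec m c)"
    unfolding span_list_def lincomb_list_as_mat_mult[OF dims] using A mat_of_cols_cols[of A] by auto
  also have "\<dots> = (\<lambda>v. A *\<^sub>v v) ` range (vec m)"
    by (simp add: image_image)
  also have "range (vec m) = carrier_vec m"
    by (auto intro!: image_eqI[where x = "\<lambda>i. _ $ i"] eq_vecI)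
  finally show ?thesis .
qed

lemma rank_le_of_cols_subset_span:
  assumes M: "M \<in> carrier_mat n c" and A: "A \<in> carrier_mat n m"
    and sub: "set (cols M) \<subseteq> span (set (cols A))"
  shows "rank M \<le> rank A"
proof -
  have cM: "set (cols M) \<subseteq> carrier_vec n" and cA: "set (cols A) \<subseteq> carrier_vec n"
    using M A cols_dim[of M] cols_dim[of A] by auto
  have "span (set (cols M)) \<subseteq> span (set (cols A))"
    by (rule span_subsetI[OF cA sub])
  then show ?thesis
    unfolding rank_def
    by (intro dim_le_of_subspace span_is_subspace cM cA fin_dim_span_cols[OF M] fin_dim_span_cols[OF A])
qed

lemma rank_mult_left:
  assumes A: "A \<in> carrier_mat n m" and B: "B \<in> carrier_mat m c"
  shows "rank (A * B) \<le> rank A"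
proof (rule rank_le_of_cols_subset_span[OF mult_carrier_mat[OF A B] A])
  have "col (A * B) j \<in> (\<lambda>v. A *\<^sub>v v) ` carrier_vec m" if "j < c" for j
    using col_mult2[OF A B that] B that by auto
  then show "set (cols (A * B)) \<subseteq> span (set (cols A))"
    unfolding span_cols_eq_image[OF A] using B by (auto simp: cols_def)
qed

lemma linear_map_mult_mat_vec:
  assumes A: "A \<in> carrier_mat n' n" and W: "subspace class_ring W V"
  shows "linear_map class_ring (vs W) (module_vec TYPE('a) n') (\<lambda>v. A *\<^sub>v v)"
proof -
  interpret W: vectorspace class_ring "vs W" by (rule subspace_is_vs[OF W])
  interpret V': vec_space "TYPE('a)" n' .
  have Wc: "x \<in> carrier_vec n" if "x \<in> W" for x
    using W that by (auto simp: subspace_def submodule_def)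
  show ?thesis
    unfolding linear_map_def mod_hom_def mod_hom_axioms_def LinearCombinations.module_hom_def
    using W.vectorspace_axioms W.module_axioms V'.vectorspace_axioms V'.module_axioms A
    by (auto simp: mult_add_distrib_mat_vec[OF A] mult_mat_vec[OF A] Wc)
qed

lemma rank_square_zero:
  assumes P: "P \<in> carrier_mat n n" and PP: "P * P = 0\<^sub>m n n"
  shows "2 * rank P \<le> n"
proof -
  interpret L: linear_map class_ring V V "\<lambda>v. P *\<^sub>v v"
  proof -
    have "subspace class_ring (carrier V) V"
      unfolding subspace_def submodule_def using vectorspace_axioms module_axioms by auto
    moreover have "vs (carrier V) = V" by (simp add: partial_object.surjective)
    ultimately show "linear_map class_ring V V (\<lambda>v. P *\<^sub>v v)"
      using linear_map_mult_mat_vec[OF P] by metis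
  qed
  have im: "L.imT = span (set (cols P))"
    unfolding L.im_def using span_cols_eq_image[OF P] by simp
  have ker: "L.kerT = mat_kernel P"
    unfolding L.ker_def mat_kernel_def using P by auto
  have "L.imT \<subseteq> L.kerT"
  proof
    fix x assume "x \<in> L.imT"
    then obtain v where v: "v \<in> carrier_vec n" and x: "x = P *\<^sub>v v" unfolding L.im_def by auto
    have "P *\<^sub>v x = (P * P) *\<^sub>v v" using x P v by simp
    also have "\<dots> = 0\<^sub>v n" using PP v by simp
    finally show "x \<in> L.kerT" unfolding L.ker_def using x P v by simp
  qed
  moreover have "vectorspace.fin_dim class_ring (vs L.kerT)"
  proof -
    interpret K: kernel n n P by unfold_locales (rule P)
    obtain B where "finite B" "K.basis B" using kernel_basis_exists[OF P] by auto
    then show ?thesis unfolding ker K.Ker.fin_dim_def K.Ker.basis_def by auto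
  qed
  moreover have "vectorspace.fin_dim class_ring (vs L.imT)"
    unfolding im by (rule fin_dim_span_cols[OF P])
  ultimately have "vectorspace.dim class_ring (vs L.imT) \<le> vectorspace.dim class_ring (vs L.kerT)"
    by (intro dim_le_of_subspace L.imT_is_subspace L.kerT_is_subspace)
  moreover have "vectorspace.dim class_ring (vs L.imT) + vectorspace.dim class_ring (vs L.kerT) = n"
    using L.rank_nullity[OF fin_dim] dim_is_n by simp
  ultimately show ?thesis unfolding rank_def im[symmetric] by linarith
qed

end

lemma rank_mult_right:
  assumes A: "A \<in> carrier_mat n m" and B: "B \<in> carrier_mat m c"
  shows "vec_space.rank n (A * B) \<le> vec_space.rank m B"
proof -
  interpret Vn: vec_space "TYPE('a::field)" n .
  interpret Vm: vec_space "TYPE('a)" m .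
  let ?U = "Vm.span (set (cols B))"
  have cB: "set (cols B) \<subseteq> carrier_vec m" using B cols_dim[of B] by auto
  have U: "subspace class_ring ?U Vm.V" by (rule Vm.span_is_subspace[OF cB])
  interpret U: vectorspace class_ring "Vm.vs ?U" by (rule Vm.subspace_is_vs[OF U])
  interpret L: linear_map class_ring "Vm.vs ?U" Vn.V "\<lambda>v. A *\<^sub>v v"
    by (rule Vm.linear_map_mult_mat_vec[OF A U])
  have "L.imT = (\<lambda>v. A *\<^sub>v v) ` ?U"
    unfolding L.im_def by simp
  also have "\<dots> = (\<lambda>v. A *\<^sub>v v) ` (\<lambda>v. B *\<^sub>v v) ` carrier_vec c"
    unfolding Vm.span_cols_eq_image[OF B] ..
  also have "\<dots> = (\<lambda>v. (A * B) *\<^sub>v v) ` carrier_vec c"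
    using A B by (force simp: image_image)
  also have "\<dots> = Vn.span (set (cols (A * B)))"
    by (rule Vn.span_cols_eq_image[symmetric, OF mult_carrier_mat[OF A B]])
  finally have im: "L.imT = Vn.span (set (cols (A * B)))" .
  have "vectorspace.dim class_ring (Vn.vs L.imT) \<le> U.dim"
    using L.rank_nullity[OF Vm.fin_dim_span_cols[OF B]] by linarith
  then show ?thesis unfolding Vn.rank_def Vm.rank_def im by linarith
qed


section \<open>Kronecker products\<close>

lemma dim_kron [simp]:
  "dim_row (kron A B) = dim_row A * dim_row B" "dim_col (kron A B) = dim_col A * dim_col B"
  by (simp_all add: kron_def)

lemma kron_carrier_mat [simp]:
  "A \<in> carrier_mat a b \<Longrightarrow> B \<in> carrier_mat c e \<Longrightarrow> kron A B \<in> carrier_mat (a * c) (b * e)"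
  unfolding carrier_mat_def kron_def by simp

lemma mod_less_of_less_mult [simp]: "(i::nat) < x * a \<Longrightarrow> i mod a < a"
  by (cases "a = 0") auto

lemma div_less_of_less_mult [simp]: "(i::nat) < x * a \<Longrightarrow> i div a < x"
  by (simp add: less_mult_imp_div_less)

lemma index_kron [simp]:
  "i < dim_row A * dim_row B \<Longrightarrow> j < dim_col A * dim_col B \<Longrightarrow>
   kron A B $$ (i, j) = A $$ (i div dim_row B, j div dim_col B) * B $$ (i mod dim_row B, j mod dim_col B)"
  unfolding kron_def by (simp only: index_mat(1) prod.case)

lemma sum_lessThan_mult_div_mod:
  fixes f :: "nat \<Rightarrow> nat \<Rightarrow> 'a::comm_monoid_add"
  assumes "e > 0"
  shows "(\<Sum>l<b * e. f (l div e) (l mod e)) = (\<Sum>x<b. \<Sum>y<e. f x y)"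
proof (induction b)
  case (Suc b)
  let ?g = "\<lambda>l. f (l div e) (l mod e)"
  have shifted: "x \<in> (\<lambda>y. b * e + y) ` {..<e}" if "b * e \<le> x" "x < Suc b * e" for x
    using that by (intro image_eqI[where x = "x - b * e"]) auto
  have "{..<Suc b * e} = {..<b * e} \<union> (\<lambda>y. b * e + y) ` {..<e}"
    by (auto simp: not_less intro: shifted)
  then have "(\<Sum>l<Suc b * e. ?g l) = (\<Sum>l<b * e. ?g l) + (\<Sum>l\<in>(\<lambda>y. b * e + y) ` {..<e}. ?g l)"
    by (simp, subst sum.union_disjoint) auto
  also have "(\<Sum>l\<in>(\<lambda>y. b * e + y) ` {..<e}. ?g l) = (\<Sum>y<e. f b y)"
    using assms by (subst sum.reindex) (auto simp: inj_on_def)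
  finally show ?case
    using Suc by simp
qed simp

lemma kron_mult:
  assumes A: "A \<in> carrier_mat a b" and B: "B \<in> carrier_mat c e"
    and C: "C \<in> carrier_mat b f" and D: "D \<in> carrier_mat e g" and "e > 0"
  shows "kron A B * kron C D = kron (A * C) (B * D)"
proof (rule eq_matI)
  fix i j assume "i < dim_row (kron (A * C) (B * D))" "j < dim_col (kron (A * C) (B * D))"
  with A B C D have i: "i < a * c" and j: "j < f * g" by auto
  have "(kron A B * kron C D) $$ (i, j) = (\<Sum>l<b * e. kron A B $$ (i, l) * kron C D $$ (l, j))"
    using A B C D i j by (simp add: scalar_prod_def atLeast0LessThan)
  also have "\<dots> = (\<Sum>l<b * e. (A $$ (i div c, l div e) * C $$ (l div e, j div g)) *
                                (B $$ (i mod c, l mod e) * D $$ (l mod e, j mod g)))"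
    using A B C D i j by (intro sum.cong refl) (auto simp: algebra_simps)
  also have "\<dots> = (\<Sum>x<b. \<Sum>y<e. (A $$ (i div c, x) * C $$ (x, j div g)) *
                                  (B $$ (i mod c, y) * D $$ (y, j mod g)))"
    by (rule sum_lessThan_mult_div_mod[OF \<open>e > 0\<close>])
  also have "\<dots> = (\<Sum>x<b. A $$ (i div c, x) * C $$ (x, j div g)) * (\<Sum>y<e. B $$ (i mod c, y) * D $$ (y, j mod g))"
    by (simp add: sum_product)
  also have "\<dots> = kron (A * C) (B * D) $$ (i, j)"
    using A B C D i j by (simp add: scalar_prod_def atLeast0LessThan)
  finally show "(kron A B * kron C D) $$ (i, j) = kron (A * C) (B * D) $$ (i, j)" .
qed (use A B C D in auto)

lemma transpose_kron: "transpose_mat (kron A B) = kron (transpose_mat A) (transpose_mat B)"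
  by (rule eq_matI) auto

lemma kron_add_left:
  assumes "A \<in> carrier_mat a b" "A' \<in> carrier_mat a b"
  shows "kron (A + A') B = kron A B + kron A' B"
  by (rule eq_matI) (use assms in \<open>auto simp: algebra_simps\<close>)

lemma kron_add_right:
  assumes "B \<in> carrier_mat a b" "B' \<in> carrier_mat a b"
  shows "kron A (B + B') = kron A B + kron A B'"
  by (rule eq_matI) (use assms in \<open>auto simp: algebra_simps\<close>)

lemma kron_smult_left: "kron (x \<cdot>\<^sub>m A) B = x \<cdot>\<^sub>m kron A B"
  by (rule eq_matI) (auto simp: algebra_simps)

lemma kron_smult_right: "kron A (x \<cdot>\<^sub>m B) = x \<cdot>\<^sub>m kron A B"
  by (rule eq_matI) (auto simp: algebra_simps)

lemma kron_one: "n > 0 \<Longrightarrow> kron (1\<^sub>m m) (1\<^sub>m n) = 1\<^sub>m (m * n)"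
proof (rule eq_matI)
  fix i j assume "n > 0" "i < dim_row (1\<^sub>m (m * n))" "j < dim_col (1\<^sub>m (m * n))"
  moreover have "(i div n = j div n \<and> i mod n = j mod n) = (i = j)"
    by (metis div_mult_mod_eq)
  ultimately show "kron (1\<^sub>m m) (1\<^sub>m n) $$ (i, j) = 1\<^sub>m (m * n) $$ (i, j)"
    by auto
qed auto

lemma kron_zero_right: "kron A (0\<^sub>m a b) = 0\<^sub>m (dim_row A * a) (dim_col A * b)"
  by (rule eq_matI) auto

lemma kron_anticomm_of_commute_right:
  assumes A: "A \<in> carrier_mat m m" "A' \<in> carrier_mat m m"
    and B: "B \<in> carrier_mat e e" "B' \<in> carrier_mat e e" "e > 0" and "B * B' = B' * B"
  shows "kron A B * kron A' B' + kron A' B' * kron A B = kron (A * A' + A' * A) (B * B')"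
  using assms by (simp add: kron_mult[of _ m m _ e e] kron_add_left[of _ m m])

lemma kron_anticomm_of_commute_left:
  assumes A: "A \<in> carrier_mat m m" "A' \<in> carrier_mat m m" "A * A' = A' * A"
    and B: "B \<in> carrier_mat e e" "B' \<in> carrier_mat e e" "e > 0"
  shows "kron A B * kron A' B' + kron A' B' * kron A B = kron (A * A') (B * B' + B' * B)"
  using assms by (simp add: kron_mult[of _ m m _ e e] kron_add_right[of _ e e])


lemma mat2_carrier [simp]: "mat2 a b c e \<in> carrier_mat 2 2"
  by (simp add: mat2_def mat_of_rows_list_def numeral_2_eq_2)

lemma dim_mat2 [simp]: "dim_row (mat2 a b c e) = 2" "dim_col (mat2 a b c e) = 2"
  by (simp_all add: mat2_def mat_of_rows_list_def)

lemma index_mat2 [simp]: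
  "mat2 a b c e $$ (0, 0) = a" "mat2 a b c e $$ (0, Suc 0) = b"
  "mat2 a b c e $$ (Suc 0, 0) = c" "mat2 a b c e $$ (Suc 0, Suc 0) = e"
  by (simp_all add: mat2_def mat_of_rows_list_def)

lemma mat2_eqI:
  assumes "A \<in> carrier_mat 2 2" "A $$ (0, 0) = a" "A $$ (0, 1) = b" "A $$ (1, 0) = c" "A $$ (1, 1) = e"
  shows "A = mat2 a b c e"
proof (rule eq_matI)
  fix i j assume "i < dim_row (mat2 a b c e)" "j < dim_col (mat2 a b c e)"
  then have "i \<in> {0, 1}" "j \<in> {0, 1}" by auto
  then show "A $$ (i, j) = mat2 a b c e $$ (i, j)" using assms by auto
qed (use assms in auto)

lemma mat2_mult [simp]:
  "mat2 a b c e * mat2 a' b' c' e' = mat2 (a*a' + b*c') (a*b' + b*e') (c*a' + e*c') (c*b' + e*e')"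
  by (rule mat2_eqI) (auto simp: scalar_prod_def numeral_2_eq_2)

lemma mat2_add [simp]: "mat2 a b c e + mat2 a' b' c' e' = mat2 (a+a') (b+b') (c+c') (e+e')"
  by (rule mat2_eqI) auto

lemma smult_mat2 [simp]: "x \<cdot>\<^sub>m mat2 a b c e = mat2 (x*a) (x*b) (x*c) (x*e)"
  by (rule mat2_eqI) auto

lemma transpose_mat2 [simp]: "transpose_mat (mat2 a b c e) = mat2 a c b e"
  by (rule mat2_eqI) auto

lemma one_mat2: "1\<^sub>m 2 = mat2 1 0 0 1"
  by (rule mat2_eqI) auto

lemma zero_mat2: "0\<^sub>m 2 2 = mat2 0 0 0 0"
  by (rule mat2_eqI) auto

abbreviation sigma_x :: "complex mat" where "sigma_x \<equiv> mat2 0 1 1 0"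
abbreviation sigma_y :: "complex mat" where "sigma_y \<equiv> mat2 0 (-\<i>) \<i> 0"
abbreviation minus_sigma_z :: "complex mat" where "minus_sigma_z \<equiv> mat2 (-1) 0 0 1"


section \<open>Dirac matrices\<close>

lemma gamma_even_carrier [simp]: "gamma_even k j \<in> carrier_mat (2 ^ k) (2 ^ k)"
proof (induction k j rule: gamma_even.induct)
  case (3 k j)
  have "2 ^ Suc (Suc k) = 2 ^ Suc k * (2::nat)" by simp
  then show ?case
    unfolding gamma_even.simps(3)
    using 3 kron_carrier_mat[OF 3 mat2_carrier] kron_carrier_mat[OF one_carrier_mat[of "2 ^ Suc k"] mat2_carrier]
    by simp
qed auto

lemma gamma_even_Suc:
  "k \<ge> 1 \<Longrightarrow> gamma_even (Suc k) j =
    (if j \<le> 2 * k then kron (gamma_even k j) minus_sigma_z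
     else if j = 2 * k + 1 then kron (1\<^sub>m (2 ^ k)) sigma_x
     else kron (1\<^sub>m (2 ^ k)) sigma_y)"
  by (cases k) auto

lemma mat_prod_list_simps [simp]:
  "mat_prod_list N [] = 1\<^sub>m N" "mat_prod_list N (A # As) = A * mat_prod_list N As"
  by (simp_all add: mat_prod_list_def)

lemma mat_prod_list_carrier:
  "\<forall>A\<in>set As. A \<in> carrier_mat N N \<Longrightarrow> mat_prod_list N As \<in> carrier_mat N N"
  by (induction As) auto

lemma mat_prod_list_append:
  assumes "\<forall>A\<in>set As. A \<in> carrier_mat N N" and Bs: "\<forall>B\<in>set Bs. B \<in> carrier_mat N N"
  shows "mat_prod_list N (As @ Bs) = mat_prod_list N As * mat_prod_list N Bs"
  using assms(1)
proof (induction As)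
  case Nil
  then show ?case using mat_prod_list_carrier[OF Bs] by simp
next
  case (Cons A As)
  then show ?case
    using mat_prod_list_carrier[OF Bs] mat_prod_list_carrier[of As N] by (simp add: assoc_mult_mat[of A N N])
qed

lemma mat_prod_list_kron_minus_sigma_z:
  "\<forall>A\<in>set As. A \<in> carrier_mat N N \<Longrightarrow>
   mat_prod_list (N * 2) (map (\<lambda>A. kron A minus_sigma_z) As) =
   kron (mat_prod_list N As) (if even (length As) then 1\<^sub>m 2 else minus_sigma_z)"
proof (induction As)
  case Nil
  then show ?case by (simp add: kron_one)
next
  case (Cons A As)
  then have "mat_prod_list (N * 2) (map (\<lambda>A. kron A minus_sigma_z) (A # As)) =
      kron (A * mat_prod_list N As) (minus_sigma_z * (if even (length As) then 1\<^sub>m 2 else minus_sigma_z))"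
    by (simp add: kron_mult[of _ N N _ 2 2 _ N _ 2] mat_prod_list_carrier)
  then show ?case by (simp add: one_mat2)
qed

lemma gamma_top_carrier [simp]: "gamma_top k \<in> carrier_mat (2 ^ k) (2 ^ k)"
  unfolding gamma_top_def by (simp add: mat_prod_list_carrier)

lemma dim_gamma_top [simp]: "dim_row (gamma_top k) = 2 ^ k" "dim_col (gamma_top k) = 2 ^ k"
  using gamma_top_carrier by blast+

lemma gamma_top_1: "gamma_top (Suc 0) = minus_sigma_z"
  by (simp add: gamma_top_def upt_rec one_mat2)

lemma mat_prod_list_gamma_even_Suc:
  assumes "k \<ge> 1"
  shows "mat_prod_list (2 ^ Suc k) (map (gamma_even (Suc k)) [1..<2 * Suc k + 1]) =
    (- \<i>) \<cdot>\<^sub>m kron (mat_prod_list (2 ^ k) (map (gamma_even k) [1..<2 * k + 1])) minus_sigma_z"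
proof -
  let ?N = "2 ^ k :: nat" and ?Gs = "map (gamma_even k) [1..<2 * k + 1]"
  let ?X = "kron (1\<^sub>m ?N) sigma_x" and ?Y = "kron (1\<^sub>m ?N) sigma_y"
  have "[1..<2 * Suc k + 1] = [1..<2 * k + 1] @ [2 * k + 1, 2 * k + 2]"
    by (simp add: upt_Suc_append)
  then have split: "map (gamma_even (Suc k)) [1..<2 * Suc k + 1] = map (\<lambda>A. kron A minus_sigma_z) ?Gs @ [?X, ?Y]"
    using assms by (simp add: gamma_even_Suc)
  have "mat_prod_list (2 ^ Suc k) (map (gamma_even (Suc k)) [1..<2 * Suc k + 1]) =
      mat_prod_list (?N * 2) (map (\<lambda>A. kron A minus_sigma_z) ?Gs) * mat_prod_list (?N * 2) [?X, ?Y]"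
    unfolding split power_Suc2 by (rule mat_prod_list_append) auto
  also have "mat_prod_list (?N * 2) (map (\<lambda>A. kron A minus_sigma_z) ?Gs) = kron (mat_prod_list ?N ?Gs) (1\<^sub>m 2)"
    by (subst mat_prod_list_kron_minus_sigma_z) auto
  also have "mat_prod_list (?N * 2) [?X, ?Y] = ?X * ?Y"
    by simp
  also have "kron (mat_prod_list ?N ?Gs) (1\<^sub>m 2) * (?X * ?Y) = kron (mat_prod_list ?N ?Gs) (sigma_x * sigma_y)"
    using mat_prod_list_carrier[of ?Gs ?N]
    by (simp add: kron_mult[of _ ?N ?N _ 2 2 _ ?N _ 2] del: upt_Suc)
  finally show ?thesis by (simp add: kron_smult_right[symmetric])
qed

lemma gamma_top_Suc:
  assumes "k \<ge> 1"
  shows "gamma_top (Suc k) = kron (gamma_top k) minus_sigma_z"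
proof -
  have "- (\<i> ^ k) * - \<i> = - (\<i> ^ (k - 1))"
    using assms by (cases k) (auto simp: algebra_simps)
  then show ?thesis
    unfolding gamma_top_def mat_prod_list_gamma_even_Suc[OF assms] by (simp add: kron_smult_left)
qed

text \<open>The matrices \<open>\<Gamma>\<^sub>1, \<dots>, \<Gamma>\<^sub>2\<^sub>k\<^sub>+\<^sub>1\<close> of dimension \<open>2k + 1\<close>; those of dimension \<open>2k\<close> are the first
  \<open>2k\<close> of them, so a single induction on \<open>k\<close> covers both parities of \<open>d\<close>.\<close>
definition gamma_odd :: "nat \<Rightarrow> nat \<Rightarrow> complex mat" where
  "gamma_odd k j = (if j \<le> 2 * k then gamma_even k j else gamma_top k)"

lemma dirac_eq_gamma_odd: "dirac d j = gamma_odd (d div 2) j"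
  by (simp add: dirac_def gamma_odd_def)

lemma gamma_odd_carrier [simp]: "gamma_odd k j \<in> carrier_mat (2 ^ k) (2 ^ k)"
  by (simp add: gamma_odd_def)

lemma dim_gamma_odd [simp]: "dim_row (gamma_odd k j) = 2 ^ k" "dim_col (gamma_odd k j) = 2 ^ k"
  using gamma_odd_carrier by blast+

lemma gamma_odd_1:
  "gamma_odd (Suc 0) (Suc 0) = mat2 0 1 (-1) 0" "gamma_odd (Suc 0) 2 = sigma_x" "j \<ge> 3 \<Longrightarrow> gamma_odd (Suc 0) j = minus_sigma_z"
  by (simp_all add: gamma_odd_def gamma_top_1)

lemma gamma_odd_Suc:
  "k \<ge> 1 \<Longrightarrow> gamma_odd (Suc k) j =
    (if j \<le> 2 * k then kron (gamma_odd k j) minus_sigma_z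
     else if j = 2 * k + 1 then kron (1\<^sub>m (2 ^ k)) sigma_x
     else if j = 2 * k + 2 then kron (1\<^sub>m (2 ^ k)) sigma_y
     else kron (gamma_odd k (2 * k + 1)) minus_sigma_z)"
  by (simp add: gamma_odd_def gamma_even_Suc gamma_top_Suc)

definition minkowski_eta :: "nat \<Rightarrow> nat \<Rightarrow> complex" where
  "minkowski_eta a b = (if a = b then (if a = 1 then -1 else 1) else 0)"

lemma gamma_odd_anticomm:
  assumes "k \<ge> 1" and "a \<in> {1..2 * k + 1}" and "b \<in> {1..2 * k + 1}"
  shows "gamma_odd k a * gamma_odd k b + gamma_odd k b * gamma_odd k a = (2 * minkowski_eta a b) \<cdot>\<^sub>m 1\<^sub>m (2 ^ k)"
  using assms
proof (induction k arbitrary: a b rule: nat_induct_at_least)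
  case base
  then have "a \<in> {1, 2, 3}" "b \<in> {1, 2, 3}" by auto
  then show ?case by (auto simp: gamma_odd_1 minkowski_eta_def one_mat2)
next
  case (Suc k)
  let ?N = "2 ^ k :: nat" and ?\<Gamma> = "gamma_odd (Suc k)" and ?new = "{2 * k + 1, 2 * k + 2}"
  let ?\<eta> = minkowski_eta
  define old where "old a = (if a \<le> 2 * k then a else 2 * k + 1)" for a
  have gamma_old: "?\<Gamma> a = kron (gamma_odd k (old a)) minus_sigma_z" "old a \<in> {1..2 * k + 1}"
    if "a \<in> {1..2 * Suc k + 1}" "a \<notin> ?new" for a
    using that Suc.hyps by (auto simp: gamma_odd_Suc old_def)
  have gamma_new: "\<exists>X \<in> {sigma_x, sigma_y}. ?\<Gamma> a = kron (1\<^sub>m ?N) X" if "a \<in> ?new" for a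
    using that Suc.hyps by (auto simp: gamma_odd_Suc)
  have old_old: "?\<Gamma> a * ?\<Gamma> b + ?\<Gamma> b * ?\<Gamma> a = (2 * ?\<eta> a b) \<cdot>\<^sub>m 1\<^sub>m (2 ^ Suc k)"
    if "a \<in> {1..2 * Suc k + 1}" "a \<notin> ?new" "b \<in> {1..2 * Suc k + 1}" "b \<notin> ?new" for a b
  proof -
    have "?\<Gamma> a * ?\<Gamma> b + ?\<Gamma> b * ?\<Gamma> a =
        kron (gamma_odd k (old a) * gamma_odd k (old b) + gamma_odd k (old b) * gamma_odd k (old a))
             (minus_sigma_z * minus_sigma_z)"
      using that by (simp add: gamma_old kron_anticomm_of_commute_right[of _ ?N _ _ 2])
    also have "\<dots> = kron ((2 * ?\<eta> (old a) (old b)) \<cdot>\<^sub>m 1\<^sub>m ?N) (1\<^sub>m 2)"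
      using Suc.IH[OF gamma_old(2)[OF that(1,2)] gamma_old(2)[OF that(3,4)]] by (simp add: one_mat2)
    also have "?\<eta> (old a) (old b) = ?\<eta> a b"
      using that Suc.hyps by (auto simp: minkowski_eta_def old_def)
    finally show ?thesis by (simp add: kron_smult_left kron_one mult.commute)
  qed
  have old_new: "?\<Gamma> a * ?\<Gamma> b + ?\<Gamma> b * ?\<Gamma> a = (2 * ?\<eta> a b) \<cdot>\<^sub>m 1\<^sub>m (2 ^ Suc k)"
    if a: "a \<in> {1..2 * Suc k + 1}" "a \<notin> ?new" and b: "b \<in> ?new" for a b
  proof -
    obtain X where X: "X \<in> {sigma_x, sigma_y}" and gamma_b: "?\<Gamma> b = kron (1\<^sub>m ?N) X"
      using gamma_new[OF b] by blast
    have "?\<Gamma> a * ?\<Gamma> b + ?\<Gamma> b * ?\<Gamma> a =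
        kron (gamma_odd k (old a) * 1\<^sub>m ?N) (minus_sigma_z * X + X * minus_sigma_z)"
      unfolding gamma_old(1)[OF a] gamma_b using X
      by (intro kron_anticomm_of_commute_left)
         (auto simp: right_mult_one_mat[OF gamma_odd_carrier] left_mult_one_mat[OF gamma_odd_carrier])
    also have "\<dots> = 0\<^sub>m (2 ^ Suc k) (2 ^ Suc k)"
      using X by (auto simp: kron_zero_right zero_mat2[symmetric] mult.commute)
    moreover have "?\<eta> a b = 0"
      using a b by (auto simp: minkowski_eta_def)
    ultimately show ?thesis by simp
  qed
  have new_new: "?\<Gamma> a * ?\<Gamma> b + ?\<Gamma> b * ?\<Gamma> a = (2 * ?\<eta> a b) \<cdot>\<^sub>m 1\<^sub>m (2 ^ Suc k)"
    if "a \<in> ?new" "b \<in> ?new" for a b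
  proof -
    have "?\<Gamma> a * ?\<Gamma> b + ?\<Gamma> b * ?\<Gamma> a = kron (1\<^sub>m ?N) ((2 * ?\<eta> a b) \<cdot>\<^sub>m 1\<^sub>m 2)"
      using that Suc.hyps
      by (auto simp: gamma_odd_Suc kron_anticomm_of_commute_left[of _ ?N _ _ 2] minkowski_eta_def one_mat2)
    then show ?thesis by (simp add: kron_smult_right kron_one mult.commute)
  qed
  have swap: "?\<Gamma> a * ?\<Gamma> b + ?\<Gamma> b * ?\<Gamma> a = ?\<Gamma> b * ?\<Gamma> a + ?\<Gamma> a * ?\<Gamma> b"
    by (rule comm_add_mat) auto
  have "?\<eta> a b = ?\<eta> b a"
    by (simp add: minkowski_eta_def)
  then show ?case
    using Suc.prems old_old old_new[of a b] old_new[of b a] new_new[of a b] swap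
    by (cases "a \<in> ?new"; cases "b \<in> ?new") auto
qed


section \<open>Charge conjugation\<close>

definition charge_conj_base :: "nat \<Rightarrow> complex mat" where
  "charge_conj_base k = mat_prod_list (2 ^ k) (map (\<lambda>m. gamma_even k (2 * m)) [2..<k + 1]) * gamma_even k 1"

lemma charge_conj_eq_base:
  "charge_conj d = (if d mod 4 = 0 then gamma_top (d div 2) * charge_conj_base (d div 2) else charge_conj_base (d div 2))"
  by (simp add: charge_conj_def charge_conj_base_def Let_def)

lemma charge_conj_base_carrier [simp]: "charge_conj_base k \<in> carrier_mat (2 ^ k) (2 ^ k)"
  unfolding charge_conj_base_def by (intro mult_carrier_mat[OF mat_prod_list_carrier]) auto

lemma dim_charge_conj_base [simp]: "dim_row (charge_conj_base k) = 2 ^ k" "dim_col (charge_conj_base k) = 2 ^ k"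
  using charge_conj_base_carrier by blast+

lemma charge_conj_base_1: "charge_conj_base (Suc 0) = mat2 0 1 (-1) 0"
  by (simp add: charge_conj_base_def one_mat2)

text \<open>Passing from \<open>k\<close> to \<open>k + 1\<close>, the \<open>k - 1\<close> factors \<open>\<Gamma>\<^sub>4, \<dots>, \<Gamma>\<^sub>2\<^sub>k\<close> and \<open>\<Gamma>\<^sub>1\<close> each acquire
  a factor \<open>-\<sigma>\<^sub>z\<close>, and the new factor \<open>\<Gamma>\<^sub>2\<^sub>k\<^sub>+\<^sub>2 = 1 \<otimes> \<sigma>\<^sub>y\<close> is appended, so the second
  Kronecker factor is \<open>(-\<sigma>\<^sub>z)\<^sup>k\<^sup>-\<^sup>1 \<sigma>\<^sub>y (-\<sigma>\<^sub>z)\<close>.\<close>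
definition charge_conj_step :: "nat \<Rightarrow> complex mat" where
  "charge_conj_step k = (if odd k then mat2 0 (-\<i>) (-\<i>) 0 else mat2 0 \<i> (-\<i>) 0)"

lemma charge_conj_base_Suc:
  assumes "k \<ge> 1"
  shows "charge_conj_base (Suc k) = kron (charge_conj_base k) (charge_conj_step k)"
proof -
  let ?N = "2 ^ k :: nat" and ?Gs = "map (\<lambda>m. gamma_even k (2 * m)) [2..<k + 1]"
  let ?X = "if even (length ?Gs) then 1\<^sub>m 2 else minus_sigma_z"
  have P: "mat_prod_list ?N ?Gs \<in> carrier_mat ?N ?N"
    by (rule mat_prod_list_carrier) auto
  have X: "?X \<in> carrier_mat 2 2" by simp
  have "[2..<Suc k + 1] = [2..<k + 1] @ [k + 1]"
    using assms by simp
  then have split: "map (\<lambda>m. gamma_even (Suc k) (2 * m)) [2..<Suc k + 1] =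
      map (\<lambda>A. kron A minus_sigma_z) ?Gs @ [kron (1\<^sub>m ?N) sigma_y]"
    using assms by (simp add: gamma_even_Suc)
  have "mat_prod_list (2 ^ Suc k) (map (\<lambda>m. gamma_even (Suc k) (2 * m)) [2..<Suc k + 1]) =
      mat_prod_list (?N * 2) (map (\<lambda>A. kron A minus_sigma_z) ?Gs) * mat_prod_list (?N * 2) [kron (1\<^sub>m ?N) sigma_y]"
    unfolding split power_Suc2 by (rule mat_prod_list_append) auto
  also have "\<dots> = kron (mat_prod_list ?N ?Gs) ?X * kron (1\<^sub>m ?N) sigma_y"
    by (subst mat_prod_list_kron_minus_sigma_z) auto
  also have "\<dots> = kron (mat_prod_list ?N ?Gs) (?X * sigma_y)"
    using kron_mult[OF P X one_carrier_mat mat2_carrier] P by simp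
  finally have "charge_conj_base (Suc k) =
      kron (mat_prod_list ?N ?Gs) (?X * sigma_y) * kron (gamma_even k 1) minus_sigma_z"
    using assms by (simp add: charge_conj_base_def gamma_even_Suc del: upt_Suc)
  also have "\<dots> = kron (charge_conj_base k) (?X * sigma_y * minus_sigma_z)"
    using kron_mult[OF P mult_carrier_mat[OF X mat2_carrier] gamma_even_carrier mat2_carrier]
    by (simp add: charge_conj_base_def)
  also have "?X * sigma_y * minus_sigma_z = charge_conj_step k"
    using assms by (cases "odd k") (auto simp: charge_conj_step_def one_mat2)
  finally show ?thesis .
qed

lemma transpose_gamma_odd_charge_conj_base:
  assumes "k \<ge> 1" and "a \<in> {1..2 * k + 1}"
  shows "transpose_mat (gamma_odd k a) * charge_conj_base k = (-1) ^ k \<cdot>\<^sub>m (charge_conj_base k * gamma_odd k a)"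
  using assms
proof (induction k arbitrary: a rule: nat_induct_at_least)
  case base
  then have "a \<in> {1, 2, 3}" by auto
  then show ?case by (auto simp: gamma_odd_1 charge_conj_base_1)
next
  case (Suc k)
  let ?N = "2 ^ k :: nat" and ?C = "charge_conj_base k" and ?M = "charge_conj_step k"
  have C: "charge_conj_base (Suc k) = kron ?C ?M"
    by (rule charge_conj_base_Suc[OF Suc.hyps])
  have transpose_kron_mult: "transpose_mat (kron G X) * kron ?C ?M = kron (transpose_mat G * ?C) (transpose_mat X * ?M)"
    if "G \<in> carrier_mat ?N ?N" "X \<in> carrier_mat 2 2" for G X
    unfolding transpose_kron using that
    by (intro kron_mult[of _ ?N ?N _ 2 2 _ ?N _ 2]) (auto simp: charge_conj_step_def)
  show ?case
  proof (cases "a \<in> {2 * k + 1, 2 * k + 2}")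
    case True
    then obtain X where gamma_a: "gamma_odd (Suc k) a = kron (1\<^sub>m ?N) X" and "X \<in> {sigma_x, sigma_y}"
      using Suc.hyps by (auto simp: gamma_odd_Suc)
    then have X: "X \<in> carrier_mat 2 2" and "transpose_mat X * ?M = (-1) ^ Suc k \<cdot>\<^sub>m (?M * X)"
      by (auto simp: charge_conj_step_def)
    then have "transpose_mat (gamma_odd (Suc k) a) * charge_conj_base (Suc k) = (-1) ^ Suc k \<cdot>\<^sub>m kron (?C * 1\<^sub>m ?N) (?M * X)"
      unfolding gamma_a C transpose_kron_mult[OF one_carrier_mat X]
      by (simp add: kron_smult_right left_mult_one_mat[OF charge_conj_base_carrier]
          right_mult_one_mat[OF charge_conj_base_carrier])
    also have "kron (?C * 1\<^sub>m ?N) (?M * X) = charge_conj_base (Suc k) * gamma_odd (Suc k) a"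
      unfolding gamma_a C using X
      by (intro kron_mult[symmetric, of _ ?N ?N _ 2 2 _ ?N _ 2]) (auto simp: charge_conj_step_def)
    finally show ?thesis .
  next
    case False
    define a' where "a' = (if a \<le> 2 * k then a else 2 * k + 1)"
    have gamma_a: "gamma_odd (Suc k) a = kron (gamma_odd k a') minus_sigma_z" and a': "a' \<in> {1..2 * k + 1}"
      using False Suc.prems Suc.hyps by (auto simp: gamma_odd_Suc a'_def)
    have "minus_sigma_z * ?M = (-1) \<cdot>\<^sub>m (?M * minus_sigma_z)"
      by (simp add: charge_conj_step_def)
    then have "transpose_mat (gamma_odd (Suc k) a) * charge_conj_base (Suc k) =
        (-1) ^ Suc k \<cdot>\<^sub>m kron (?C * gamma_odd k a') (?M * minus_sigma_z)"
      unfolding gamma_a C transpose_kron_mult[OF gamma_odd_carrier mat2_carrier] Suc.IH[OF a']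
      by (simp add: kron_smult_left kron_smult_right mult.commute)
    also have "kron (?C * gamma_odd k a') (?M * minus_sigma_z) = charge_conj_base (Suc k) * gamma_odd (Suc k) a"
      unfolding gamma_a C
      by (intro kron_mult[symmetric, of _ ?N ?N _ 2 2 _ ?N _ 2]) (auto simp: charge_conj_step_def)
    finally show ?thesis .
  qed
qed

definition charge_conj_sign :: "nat \<Rightarrow> complex" where
  "charge_conj_sign k = (if k mod 4 \<in> {0, 3} then 1 else -1)"

lemma charge_conj_sign_Suc: "charge_conj_sign (Suc k) = (if odd k then 1 else -1) * charge_conj_sign k"
proof -
  have "k mod 4 \<in> {0, 1, 2, 3}" and "odd k \<longleftrightarrow> k mod 4 \<in> {1, 3}" and "Suc k mod 4 = (Suc (k mod 4)) mod 4"
    by (auto simp: mod_Suc) presburger+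
  then show ?thesis by (auto simp: charge_conj_sign_def)
qed

lemma transpose_charge_conj_base:
  "k \<ge> 1 \<Longrightarrow> transpose_mat (charge_conj_base k) = charge_conj_sign k \<cdot>\<^sub>m charge_conj_base k"
proof (induction k rule: nat_induct_at_least)
  case base
  then show ?case by (simp add: charge_conj_base_1 charge_conj_sign_def)
next
  case (Suc k)
  have "transpose_mat (charge_conj_step k) = (if odd k then 1 else -1) \<cdot>\<^sub>m charge_conj_step k"
    by (simp add: charge_conj_step_def)
  then show ?case
    unfolding charge_conj_base_Suc[OF Suc.hyps] transpose_kron Suc.IH charge_conj_sign_Suc
    by (simp add: kron_smult_left kron_smult_right mult.commute)
qed

lemma transpose_gamma_top: "k \<ge> 1 \<Longrightarrow> transpose_mat (gamma_top k) = gamma_top k"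
  by (induction k rule: nat_induct_at_least) (simp_all add: gamma_top_1 gamma_top_Suc transpose_kron)


locale dirac_dim =
  fixes d :: nat
  assumes two_le_dim: "2 \<le> d"
begin

abbreviation N :: nat where "N \<equiv> 2 ^ (d div 2)"
abbreviation C :: "complex mat" where "C \<equiv> charge_conj d"
abbreviation \<Gamma> :: "nat \<Rightarrow> complex mat" where "\<Gamma> \<equiv> dirac d"

lemma one_le_half_dim: "1 \<le> d div 2"
  using two_le_dim by auto

lemma dirac_carrier [simp]: "\<Gamma> j \<in> carrier_mat N N"
  by (simp add: dirac_eq_gamma_odd)

lemma dirac_index_range: "a \<in> {1..d} \<Longrightarrow> a \<in> {1..2 * (d div 2) + 1}"
  by auto

lemma dim_dirac [simp]: "dim_row (\<Gamma> j) = N" "dim_col (\<Gamma> j) = N"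
  using dirac_carrier by blast+

lemma charge_conj_carrier [simp]: "C \<in> carrier_mat N N"
  unfolding charge_conj_eq_base by (simp add: mult_carrier_mat[of _ N N])

lemma dim_charge_conj [simp]: "dim_row C = N" "dim_col C = N"
  using charge_conj_carrier by blast+

lemma dirac_anticomm:
  "a \<in> {1..d} \<Longrightarrow> b \<in> {1..d} \<Longrightarrow> \<Gamma> a * \<Gamma> b + \<Gamma> b * \<Gamma> a = (2 * minkowski_eta a b) \<cdot>\<^sub>m 1\<^sub>m N"
  unfolding dirac_eq_gamma_odd by (intro gamma_odd_anticomm one_le_half_dim dirac_index_range)

lemma dirac_square: "a \<in> {1..d} \<Longrightarrow> \<Gamma> a * \<Gamma> a = minkowski_eta a a \<cdot>\<^sub>m 1\<^sub>m N"
  by (rule eq_smult_one_mat_if_double) (auto simp: dirac_anticomm mult_carrier_mat[of _ N N])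

lemma transpose_charge_conj: "transpose_mat C = charge_conj_sign (d div 2) \<cdot>\<^sub>m C"
proof (cases "d mod 4 = 0")
  case False
  then show ?thesis
    by (simp add: charge_conj_eq_base transpose_charge_conj_base[OF one_le_half_dim])
next
  case True
  let ?k = "d div 2"
  let ?T = "gamma_top ?k" and ?B = "charge_conj_base ?k"
  have T: "?T \<in> carrier_mat N N" and B: "?B \<in> carrier_mat N N" by auto
  have "transpose_mat ?T * ?B = (-1) ^ ?k \<cdot>\<^sub>m (?B * ?T)"
    using transpose_gamma_odd_charge_conj_base[OF one_le_half_dim, of "2 * ?k + 1"]
    by (simp add: gamma_odd_def)
  moreover have "even ?k" using True by presburger
  ultimately have commute: "?T * ?B = ?B * ?T"
    by (simp add: transpose_gamma_top[OF one_le_half_dim])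
  have "transpose_mat (?T * ?B) = transpose_mat ?B * transpose_mat ?T"
    by (rule transpose_mult[OF T B])
  also have "\<dots> = charge_conj_sign ?k \<cdot>\<^sub>m (?B * ?T)"
    by (simp add: transpose_charge_conj_base[OF one_le_half_dim] transpose_gamma_top[OF one_le_half_dim]
        mult_smult_assoc_mat[OF B T])
  finally show ?thesis
    using True commute by (simp add: charge_conj_eq_base)
qed

definition dirac_transpose_sign :: complex where
  "dirac_transpose_sign = (if even d then -1 else (-1) ^ (d div 2))"

lemma transpose_dirac_charge_conj:
  assumes a: "a \<in> {1..d}"
  shows "transpose_mat (\<Gamma> a) * C = dirac_transpose_sign \<cdot>\<^sub>m (C * \<Gamma> a)"
proof (cases "d mod 4 = 0")
  case False
  then have "even d \<Longrightarrow> odd (d div 2)" by presburger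
  with False show ?thesis
    using transpose_gamma_odd_charge_conj_base[OF one_le_half_dim dirac_index_range[OF a]]
    by (auto simp: charge_conj_eq_base dirac_eq_gamma_odd dirac_transpose_sign_def)
next
  case True
  \<comment> \<open>here \<open>C = \<Gamma>\<^sub>2\<^sub>k\<^sub>+\<^sub>1 * charge_conj_base k\<close>, and \<open>\<Gamma>\<^sub>2\<^sub>k\<^sub>+\<^sub>1\<close> anticommutes with \<open>\<Gamma>\<^sub>a\<close>\<close>
  let ?k = "d div 2"
  let ?T = "gamma_top ?k" and ?B = "charge_conj_base ?k" and ?A = "\<Gamma> a"
  have T: "?T \<in> carrier_mat N N" and B: "?B \<in> carrier_mat N N" and A: "?A \<in> carrier_mat N N"
    and At: "transpose_mat ?A \<in> carrier_mat N N" by auto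
  have "even ?k" "even d" using True by presburger+
  have "?T = gamma_odd ?k (2 * ?k + 1)" by (simp add: gamma_odd_def)
  moreover have "a \<le> 2 * ?k" using a \<open>even d\<close> by auto
  ultimately have "?A * ?T + ?T * ?A = 0\<^sub>m N N"
    using gamma_odd_anticomm[OF one_le_half_dim, of a "2 * ?k + 1"] a
    by (simp add: dirac_eq_gamma_odd minkowski_eta_def)
  moreover have "transpose_mat (?A * ?T + ?T * ?A) = ?T * transpose_mat ?A + transpose_mat ?A * ?T"
    using transpose_add[OF mult_carrier_mat[OF A T] mult_carrier_mat[OF T A]]
      transpose_mult[OF A T] transpose_mult[OF T A]
    by (simp add: transpose_gamma_top[OF one_le_half_dim])
  ultimately have "?T * transpose_mat ?A + transpose_mat ?A * ?T = 0\<^sub>m N N"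
    by simp
  then have anticommute: "transpose_mat ?A * ?T = - (?T * transpose_mat ?A)"
    by (rule eq_uminus_if_add_eq_zero_mat[OF mult_carrier_mat[OF At T] mult_carrier_mat[OF T At]])
  have "transpose_mat ?A * (?T * ?B) = (transpose_mat ?A * ?T) * ?B"
    by (rule assoc_mult_mat[symmetric, OF At T B])
  also have "\<dots> = - (?T * (transpose_mat ?A * ?B))"
    unfolding anticommute using assoc_mult_mat[OF T At B] T At B
    by (simp add: uminus_mult_left_mat)
  also have "transpose_mat ?A * ?B = ?B * ?A"
    using transpose_gamma_odd_charge_conj_base[OF one_le_half_dim dirac_index_range[OF a]] \<open>even ?k\<close>
    by (simp add: dirac_eq_gamma_odd)
  also have "- (?T * (?B * ?A)) = (-1) \<cdot>\<^sub>m ((?T * ?B) * ?A)"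
    by (simp add: assoc_mult_mat[OF T B A] uminus_eq_smult_mat)
  finally show ?thesis
    using True \<open>even d\<close> by (simp add: charge_conj_eq_base dirac_transpose_sign_def)
qed

end


section \<open>Slashed momenta\<close>

context dirac_dim
begin

definition gamma_comb :: "(nat \<Rightarrow> complex) \<Rightarrow> nat list \<Rightarrow> complex mat" where
  "gamma_comb c js = foldr (+) (map (\<lambda>j. c j \<cdot>\<^sub>m \<Gamma> j) js) (0\<^sub>m N N)"

lemma gamma_comb_simps [simp]:
  "gamma_comb c [] = 0\<^sub>m N N" "gamma_comb c (j # js) = c j \<cdot>\<^sub>m \<Gamma> j + gamma_comb c js"
  by (simp_all add: gamma_comb_def)

lemma gamma_comb_carrier [simp]: "gamma_comb c js \<in> carrier_mat N N"
  by (induction js) auto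

lemma transpose_gamma_comb_charge_conj:
  "set js \<subseteq> {1..d} \<Longrightarrow> transpose_mat (gamma_comb c js) * C = dirac_transpose_sign \<cdot>\<^sub>m (C * gamma_comb c js)"
proof (induction js)
  case Nil
  then show ?case
    using left_mult_zero_mat[OF charge_conj_carrier] right_mult_zero_mat[OF charge_conj_carrier] by simp
next
  case (Cons j js)
  let ?Q = "gamma_comb c js"
  have j: "j \<in> {1..d}" and IH: "transpose_mat ?Q * C = dirac_transpose_sign \<cdot>\<^sub>m (C * ?Q)"
    using Cons by auto
  have "transpose_mat (gamma_comb c (j # js)) = c j \<cdot>\<^sub>m transpose_mat (\<Gamma> j) + transpose_mat ?Q"
    by (simp add: transpose_add[of _ N N] transpose_smult_mat)
  then have "transpose_mat (gamma_comb c (j # js)) * C = c j \<cdot>\<^sub>m (transpose_mat (\<Gamma> j) * C) + transpose_mat ?Q * C"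
    by (simp add: add_mult_distrib_mat[of _ N N _ _ N] mult_smult_assoc_mat[of _ N N _ N])
  also have "\<dots> = dirac_transpose_sign \<cdot>\<^sub>m (c j \<cdot>\<^sub>m (C * \<Gamma> j) + C * ?Q)"
    unfolding transpose_dirac_charge_conj[OF j] IH
    using add_smult_distrib_left_mat[OF smult_carrier_mat[OF mult_carrier_mat[OF charge_conj_carrier dirac_carrier]]
        mult_carrier_mat[OF charge_conj_carrier gamma_comb_carrier], of dirac_transpose_sign "c j" j c js]
    by (simp add: mult.commute)
  also have "c j \<cdot>\<^sub>m (C * \<Gamma> j) + C * ?Q = C * gamma_comb c (j # js)"
    using mult_add_distrib_mat[OF charge_conj_carrier smult_carrier_mat[OF dirac_carrier] gamma_comb_carrier]
      mult_smult_distrib[OF charge_conj_carrier dirac_carrier]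
    by simp
  finally show ?case .
qed

lemma dirac_gamma_comb_anticomm:
  "j \<in> {1..d} \<Longrightarrow> set js \<subseteq> {1..d} \<Longrightarrow> j \<notin> set js \<Longrightarrow>
   \<Gamma> j * gamma_comb c js + gamma_comb c js * \<Gamma> j = 0\<^sub>m N N"
proof (induction js)
  case (Cons i js)
  let ?Q = "gamma_comb c js" and ?A = "\<Gamma> j" and ?B = "\<Gamma> i"
  have "?A * ?B + ?B * ?A = 0\<^sub>m N N"
    using dirac_anticomm[of j i] Cons.prems by (auto simp: minkowski_eta_def)
  moreover have "?A * ?Q + ?Q * ?A = 0\<^sub>m N N"
    using Cons by auto
  moreover have "?A * gamma_comb c (i # js) + gamma_comb c (i # js) * ?A =
      c i \<cdot>\<^sub>m (?A * ?B + ?B * ?A) + (?A * ?Q + ?Q * ?A)"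
    by (simp add: anticomm_smult_add_mat[of _ N])
  ultimately show ?case by simp
qed simp

lemma gamma_comb_square:
  "distinct js \<Longrightarrow> set js \<subseteq> {1..d} \<Longrightarrow>
   gamma_comb c js * gamma_comb c js = (\<Sum>j\<in>set js. c j ^ 2 * minkowski_eta j j) \<cdot>\<^sub>m 1\<^sub>m N"
proof (induction js)
  case (Cons i js)
  let ?Q = "gamma_comb c js" and ?B = "c i \<cdot>\<^sub>m \<Gamma> i"
  have i: "i \<in> {1..d}" and "i \<notin> set js" using Cons.prems by auto
  have "?B * ?B = (c i ^ 2 * minkowski_eta i i) \<cdot>\<^sub>m 1\<^sub>m N"
    by (simp add: mult_smult_distrib[of _ N N _ N] mult_smult_assoc_mat[of _ N N _ N] dirac_square[OF i]
        power2_eq_square mult.assoc)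
  moreover have "?B * ?Q + ?Q * ?B = c i \<cdot>\<^sub>m (\<Gamma> i * ?Q + ?Q * \<Gamma> i)"
    using mult_smult_assoc_mat[of "\<Gamma> i" N N ?Q N] mult_smult_distrib[of ?Q N N "\<Gamma> i" N]
      add_smult_distrib_left_mat[OF mult_carrier_mat[OF dirac_carrier gamma_comb_carrier]
        mult_carrier_mat[OF gamma_comb_carrier dirac_carrier]]
    by simp
  moreover have "\<Gamma> i * ?Q + ?Q * \<Gamma> i = 0\<^sub>m N N"
    using dirac_gamma_comb_anticomm[OF i] Cons.prems by simp
  moreover have "?Q * ?Q = (\<Sum>j\<in>set js. c j ^ 2 * minkowski_eta j j) \<cdot>\<^sub>m 1\<^sub>m N"
    using Cons by auto
  ultimately show ?case
    using \<open>i \<notin> set js\<close>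
    by (simp add: square_add_mat[of _ N] add_smult_distrib_right_mat[of _ N N, symmetric])
qed simp

lemma charge_conj_form_gamma_comb:
  assumes "u \<in> carrier_vec N" and "w \<in> carrier_vec N"
  shows "u \<bullet> (C *\<^sub>v (gamma_comb c js *\<^sub>v w)) = (\<Sum>j\<leftarrow>js. c j * (u \<bullet> (C *\<^sub>v (\<Gamma> j *\<^sub>v w))))"
proof (induction js)
  case (Cons j js)
  have v: "\<Gamma> j *\<^sub>v w \<in> carrier_vec N" "gamma_comb c js *\<^sub>v w \<in> carrier_vec N"
    "C *\<^sub>v (\<Gamma> j *\<^sub>v w) \<in> carrier_vec N" "C *\<^sub>v (gamma_comb c js *\<^sub>v w) \<in> carrier_vec N"
    using assms by (auto intro!: mult_mat_vec_carrier[of _ N N])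
  have "gamma_comb c (j # js) *\<^sub>v w = c j \<cdot>\<^sub>v (\<Gamma> j *\<^sub>v w) + gamma_comb c js *\<^sub>v w"
    using assms by (simp add: add_mult_distrib_mat_vec[of _ N N] smult_mat_mult_vec[of _ N N])
  then show ?case
    using Cons assms v
    by (simp add: mult_add_distrib_mat_vec[of _ N N] mult_mat_vec[of _ N N] scalar_prod_add_distrib[of _ N])
qed (use assms in \<open>simp add: mult_zero_vec_mat[OF charge_conj_carrier]\<close>)

definition lower_index :: "(nat \<Rightarrow> complex) \<Rightarrow> nat \<Rightarrow> complex" where
  "lower_index x j = minkowski_eta j j * x j"

lemma slashP_eq_gamma_comb: "slashP d x = gamma_comb (lower_index x) [1..<d + 1]"
proof -
  have "[1..<d + 1] = 1 # [2..<d + 1]"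
    using two_le_dim upt_conv_Cons[of 1 "d + 1"] by (simp add: numeral_2_eq_2)
  then have "gamma_comb (lower_index x) [1..<d + 1] = lower_index x 1 \<cdot>\<^sub>m \<Gamma> 1 + gamma_comb (lower_index x) [2..<d + 1]"
    by (simp del: upt_Suc)
  also have "gamma_comb (lower_index x) [2..<d + 1] = foldr (+) (map (\<lambda>j. x j \<cdot>\<^sub>m \<Gamma> j) [2..<d + 1]) (0\<^sub>m N N)"
    unfolding gamma_comb_def
    by (intro arg_cong[where f = "\<lambda>As. foldr (+) As _"] map_cong) (auto simp: lower_index_def minkowski_eta_def)
  finally have "gamma_comb (lower_index x) [1..<d + 1] =
      lower_index x 1 \<cdot>\<^sub>m \<Gamma> 1 + foldr (+) (map (\<lambda>j. x j \<cdot>\<^sub>m \<Gamma> j) [2..<d + 1]) (0\<^sub>m N N)" .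
  moreover have "lower_index x 1 = - x 1"
    by (simp add: lower_index_def minkowski_eta_def)
  ultimately show ?thesis
    by (simp add: slashP_def del: upt_Suc)
qed

lemma slashP_carrier [simp]: "slashP d x \<in> carrier_mat N N"
  by (simp add: slashP_eq_gamma_comb)

lemma transpose_slashP_charge_conj: "transpose_mat (slashP d x) * C = dirac_transpose_sign \<cdot>\<^sub>m (C * slashP d x)"
  unfolding slashP_eq_gamma_comb by (rule transpose_gamma_comb_charge_conj) auto

lemma slashP_square: "slashP d x * slashP d x = mdot d x x \<cdot>\<^sub>m 1\<^sub>m N"
proof -
  have "(\<Sum>j\<in>{1..d}. lower_index x j ^ 2 * minkowski_eta j j) = (\<Sum>j\<in>insert 1 {2..d}. minkowski_eta j j * (x j * x j))"
    using two_le_dim by (intro sum.cong) (auto simp: lower_index_def minkowski_eta_def power2_eq_square)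
  also have "\<dots> = mdot d x x"
    by (simp add: mdot_def minkowski_eta_def)
  finally show ?thesis
    unfolding slashP_eq_gamma_comb using gamma_comb_square[of "[1..<d + 1]" "lower_index x"]
    by (simp add: atLeastLessThanSuc_atLeastAtMost del: upt_Suc)
qed

lemma charge_conj_form_slashP:
  assumes "u \<in> carrier_vec N" and "w \<in> carrier_vec N"
  shows "u \<bullet> (C *\<^sub>v (slashP d x *\<^sub>v w)) = (\<Sum>j\<in>{1..d}. lower_index x j * (u \<bullet> (C *\<^sub>v (\<Gamma> j *\<^sub>v w))))"
  unfolding slashP_eq_gamma_comb charge_conj_form_gamma_comb[OF assms]
  by (simp add: sum_set_upt_conv_sum_list_nat[symmetric] atLeastLessThanSuc_atLeastAtMost del: upt_Suc)

end


section \<open>Spinor brackets\<close>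

context dirac_dim
begin

lemma ket_carrier [simp]: "ket d x v \<in> carrier_vec N"
  unfolding ket_def by (rule carrier_vecI) (simp add: carrier_matD(1)[OF slashP_carrier])

lemma dim_ket [simp]: "dim_vec (ket d x v) = N"
  using ket_carrier carrier_vecD by blast

lemma charge_conj_form_slashP_null:
  assumes "mdot d x x = 0" and v: "v \<in> carrier_vec N" and w: "w \<in> carrier_vec N"
  shows "ket d x v \<bullet> (C *\<^sub>v (slashP d x *\<^sub>v w)) = 0"
proof -
  let ?P = "slashP d x"
  have P: "?P \<in> carrier_mat N N" and Pt: "transpose_mat ?P \<in> carrier_mat N N" by auto
  have "transpose_mat ?P * (C * ?P) = (transpose_mat ?P * C) * ?P"
    by (rule assoc_mult_mat[symmetric, OF Pt charge_conj_carrier P])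
  also have "\<dots> = dirac_transpose_sign \<cdot>\<^sub>m (C * (?P * ?P))"
    unfolding transpose_slashP_charge_conj
    using mult_smult_assoc_mat[OF mult_carrier_mat[OF charge_conj_carrier P] P] assoc_mult_mat[OF charge_conj_carrier P P]
    by simp
  also have "\<dots> = 0\<^sub>m N N"
    using assms(1) right_mult_zero_mat[OF charge_conj_carrier] by (simp add: slashP_square)
  finally have PCP: "transpose_mat ?P * (C * ?P) = 0\<^sub>m N N" .
  have CPw: "C *\<^sub>v (?P *\<^sub>v w) \<in> carrier_vec N"
    by (rule mult_mat_vec_carrier[OF charge_conj_carrier mult_mat_vec_carrier[OF P w]])
  have "ket d x v \<bullet> (C *\<^sub>v (?P *\<^sub>v w)) = (C *\<^sub>v (?P *\<^sub>v w)) \<bullet> (?P *\<^sub>v v)"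
    unfolding ket_def by (rule comm_scalar_prod[OF mult_mat_vec_carrier[OF P v] CPw])
  also have "\<dots> = v \<bullet> (transpose_mat ?P *\<^sub>v (C *\<^sub>v (?P *\<^sub>v w)))"
    by (rule scalar_prod_mult_mat_vec_swap[OF CPw v P])
  also have "transpose_mat ?P *\<^sub>v (C *\<^sub>v (?P *\<^sub>v w)) = (transpose_mat ?P * (C * ?P)) *\<^sub>v w"
    using assoc_mult_mat_vec[OF Pt mult_carrier_mat[OF charge_conj_carrier P] w]
      assoc_mult_mat_vec[OF charge_conj_carrier P w] by simp
  finally show ?thesis
    using v w by (simp add: PCP)
qed

lemma br2_diag:
  "mdot d (p i) (p i) = 0 \<Longrightarrow> z i \<in> carrier_vec N \<Longrightarrow> br2 d p z i i = 0"
  unfolding br2_def by (subst (2) ket_def) (rule charge_conj_form_slashP_null)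

lemma br3_diag_left:
  "mdot d (p j) (p j) = 0 \<Longrightarrow> z j \<in> carrier_vec N \<Longrightarrow> br3 d p z j j i = 0"
  unfolding br3_def by (rule charge_conj_form_slashP_null) auto

lemma br3_diag_right:
  assumes "mdot d (p j) (p j) = 0" and zj: "z j \<in> carrier_vec N"
  shows "br3 d p z i j j = 0"
proof -
  let ?P = "slashP d (p j)"
  have "?P *\<^sub>v ket d (p j) (z j) = (?P * ?P) *\<^sub>v z j"
    using assoc_mult_mat_vec[OF slashP_carrier slashP_carrier zj] by (simp add: ket_def)
  also have "\<dots> = 0\<^sub>v N"
    using assms by (simp add: slashP_square)
  finally show ?thesis
    by (simp add: br3_def mult_zero_vec_mat[OF charge_conj_carrier])
qed

lemma br2_swap: "br2 d p z j i = charge_conj_sign (d div 2) * br2 d p z i j"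
  unfolding br2_def
  by (subst scalar_prod_mult_mat_vec_swap[of _ N]) (simp_all add: transpose_charge_conj smult_mat_mult_vec[of _ N N])

lemma br3_swap: "br3 d p z k j i = charge_conj_sign (d div 2) * dirac_transpose_sign * br3 d p z i j k"
proof -
  let ?P = "slashP d (p j)"
  have P: "?P \<in> carrier_mat N N" and CP: "C * ?P \<in> carrier_mat N N"
    using mult_carrier_mat[OF charge_conj_carrier slashP_carrier] by auto
  have "transpose_mat (C * ?P) = transpose_mat ?P * (charge_conj_sign (d div 2) \<cdot>\<^sub>m C)"
    by (simp add: transpose_mult[OF charge_conj_carrier P] transpose_charge_conj)
  also have "\<dots> = (charge_conj_sign (d div 2) * dirac_transpose_sign) \<cdot>\<^sub>m (C * ?P)"
    by (simp add: mult_smult_distrib[of _ N N _ N] transpose_slashP_charge_conj)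
  finally have "transpose_mat (C * ?P) = (charge_conj_sign (d div 2) * dirac_transpose_sign) \<cdot>\<^sub>m (C * ?P)" .
  then show ?thesis
    unfolding br3_def assoc_mult_mat_vec[OF charge_conj_carrier P ket_carrier, symmetric]
    by (subst scalar_prod_mult_mat_vec_swap[OF _ _ CP]) (simp_all add: smult_mat_mult_vec[OF CP])
qed

lemma sum_br3_eq_zero:
  assumes "in_V d n p"
  shows "(\<Sum>j = 1..n. br3 d p z a j b) = 0"
proof -
  let ?L = "\<lambda>t. ket d (p a) (z a) \<bullet> (C *\<^sub>v (\<Gamma> t *\<^sub>v ket d (p b) (z b)))"
  have "(\<Sum>j = 1..n. br3 d p z a j b) = (\<Sum>j = 1..n. \<Sum>t = 1..d. lower_index (p j) t * ?L t)"
    unfolding br3_def by (intro sum.cong refl charge_conj_form_slashP) auto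
  also have "\<dots> = (\<Sum>t = 1..d. (\<Sum>j = 1..n. lower_index (p j) t) * ?L t)"
    by (subst sum.swap) (simp add: sum_distrib_right)
  also have "\<dots> = 0"
    using assms by (simp add: in_V_def lower_index_def sum_distrib_left[symmetric])
  finally show ?thesis .
qed

definition ket_mat :: "nat \<Rightarrow> (nat \<Rightarrow> nat \<Rightarrow> complex) \<Rightarrow> (nat \<Rightarrow> complex vec) \<Rightarrow> complex mat" where
  "ket_mat n p z = mat_of_rows N (map (\<lambda>a. ket d (p (a + 1)) (z (a + 1))) [0..<n])"

lemma ket_mat_carrier [simp]: "ket_mat n p z \<in> carrier_mat n N"
  using mat_of_rows_carrier(1)[of N "map (\<lambda>a. ket d (p (a + 1)) (z (a + 1))) [0..<n]"]
  by (simp add: ket_mat_def)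

lemma row_ket_mat [simp]: "a < n \<Longrightarrow> row (ket_mat n p z) a = ket d (p (a + 1)) (z (a + 1))"
  by (simp add: ket_mat_def)

lemma dim_ket_mat [simp]: "dim_row (ket_mat n p z) = n" "dim_col (ket_mat n p z) = N"
  using ket_mat_carrier by blast+

lemma Smat_eq_ket_mat: "Smat d n p z = ket_mat n p z * (C * transpose_mat (ket_mat n p z))"
proof (rule eq_matI)
  fix a b assume "a < dim_row (ket_mat n p z * (C * transpose_mat (ket_mat n p z)))"
    "b < dim_col (ket_mat n p z * (C * transpose_mat (ket_mat n p z)))"
  then have "a < n" "b < n" by auto
  then show "Smat d n p z $$ (a, b) = (ket_mat n p z * (C * transpose_mat (ket_mat n p z))) $$ (a, b)"
    by (simp add: Smat_def br2_def col_mult2[OF charge_conj_carrier transpose_carrier_mat[THEN iffD2, OF ket_mat_carrier]])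
qed (simp_all add: Smat_def)

lemma Tmat_eq_ket_mat:
  "Tmat d n p z j = ket_mat n p z * (C * (slashP d (p j) * transpose_mat (ket_mat n p z)))"
proof (rule eq_matI)
  let ?K = "ket_mat n p z" and ?P = "slashP d (p j)"
  have Kt: "transpose_mat ?K \<in> carrier_mat N n" by simp
  fix a b assume "a < dim_row (?K * (C * (?P * transpose_mat ?K)))" "b < dim_col (?K * (C * (?P * transpose_mat ?K)))"
  then have "a < n" "b < n" by auto
  then show "Tmat d n p z j $$ (a, b) = (?K * (C * (?P * transpose_mat ?K))) $$ (a, b)"
    by (simp add: Tmat_def br3_def col_mult2[OF charge_conj_carrier mult_carrier_mat[OF slashP_carrier Kt]]
        col_mult2[OF slashP_carrier Kt])
qed (simp_all add: Tmat_def)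

lemma rank_Smat: "mrank n (Smat d n p z) \<le> N"
proof -
  interpret V: vec_space "TYPE(complex)" n .
  have "V.rank (Smat d n p z) \<le> V.rank (ket_mat n p z)"
    unfolding Smat_eq_ket_mat by (rule V.rank_mult_left) auto
  also have "\<dots> \<le> N"
    by (rule V.rank_le_nc[OF ket_mat_carrier])
  finally show ?thesis .
qed

lemma rank_Tmat:
  assumes "mdot d (p j) (p j) = 0"
  shows "mrank n (Tmat d n p z j) \<le> 2 ^ (d div 2 - 1)"
proof -
  interpret W: vec_space "TYPE(complex)" N .
  let ?P = "slashP d (p j)" and ?K = "transpose_mat (ket_mat n p z)"
  have "mrank n (Tmat d n p z j) \<le> W.rank (C * (?P * ?K))"
    unfolding Tmat_eq_ket_mat by (rule rank_mult_right) auto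
  also have "\<dots> \<le> W.rank (?P * ?K)"
    using transpose_carrier_mat[THEN iffD2, OF ket_mat_carrier]
    by (intro rank_mult_right[OF charge_conj_carrier mult_carrier_mat[OF slashP_carrier]])
  also have "\<dots> \<le> W.rank ?P"
    by (rule W.rank_mult_left[of _ N _ n]) auto
  finally have "mrank n (Tmat d n p z j) \<le> W.rank ?P" .
  moreover have "2 * W.rank ?P \<le> N"
    using W.rank_square_zero[OF slashP_carrier, of "p j"] assms by (simp add: slashP_square)
  moreover have "N = 2 * 2 ^ (d div 2 - 1)"
    using one_le_half_dim by (simp flip: power_Suc)
  ultimately show ?thesis by linarith
qed

lemma transpose_Smat: "transpose_mat (Smat d n p z) = charge_conj_sign (d div 2) \<cdot>\<^sub>m Smat d n p z"
proof (rule eq_matI)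
  fix a b assume "a < dim_row (charge_conj_sign (d div 2) \<cdot>\<^sub>m Smat d n p z)"
    "b < dim_col (charge_conj_sign (d div 2) \<cdot>\<^sub>m Smat d n p z)"
  then show "transpose_mat (Smat d n p z) $$ (a, b) = (charge_conj_sign (d div 2) \<cdot>\<^sub>m Smat d n p z) $$ (a, b)"
    using br2_swap[of p z "b + 1" "a + 1"] by (simp add: Smat_def)
qed (simp_all add: Smat_def)

lemma transpose_Tmat:
  "transpose_mat (Tmat d n p z j) = (charge_conj_sign (d div 2) * dirac_transpose_sign) \<cdot>\<^sub>m Tmat d n p z j"
proof (rule eq_matI)
  let ?s = "charge_conj_sign (d div 2) * dirac_transpose_sign"
  fix a b assume "a < dim_row (?s \<cdot>\<^sub>m Tmat d n p z j)" "b < dim_col (?s \<cdot>\<^sub>m Tmat d n p z j)"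
  then show "transpose_mat (Tmat d n p z j) $$ (a, b) = (?s \<cdot>\<^sub>m Tmat d n p z j) $$ (a, b)"
    using br3_swap[of p z "b + 1" j "a + 1"] by (simp add: Tmat_def)
qed (simp_all add: Tmat_def)

lemma charge_conj_sign_mult_dirac_transpose_sign:
  "charge_conj_sign (d div 2) * dirac_transpose_sign = (if d mod 8 \<in> {1, 2, 3, 4} then 1 else -1)"
proof -
  have "d div 2 mod 4 = d mod 8 div 2" and "even d \<longleftrightarrow> even (d mod 8)" and "even (d div 2) \<longleftrightarrow> even (d mod 8 div 2)"
    by presburger+
  moreover have "d mod 8 \<in> {0, 1, 2, 3, 4, 5, 6, 7}" by auto
  ultimately show ?thesis
    by (auto simp: charge_conj_sign_def dirac_transpose_sign_def minus_one_power_iff)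
qed

end

theorem mainTheorem7:
  fixes d n k :: nat and p :: "nat \<Rightarrow> nat \<Rightarrow> complex" and z :: "nat \<Rightarrow> complex vec"
  assumes "d \<ge> 2" and "n \<ge> 1" and "k = d div 2"
    and "in_V d n p"
    and "\<forall>i\<in>{1..n}. dim_vec (z i) = 2 ^ k"
  shows "(mrank n (Smat d n p z) \<le> 2 ^ k
      \<and> (\<forall>i\<in>{1..n}. br2 d p z i i = 0)
      \<and> (k mod 4 \<in> {0, 3} \<longrightarrow> transpose_mat (Smat d n p z) = Smat d n p z)
      \<and> (k mod 4 \<notin> {0, 3} \<longrightarrow> transpose_mat (Smat d n p z) = - Smat d n p z))
    \<and> (\<forall>j\<in>{1..n}.
         mrank n (Tmat d n p z j) \<le> 2 ^ (k - 1)
       \<and> (\<forall>i\<in>{1..n}. br3 d p z j j i = 0 \<and> br3 d p z i j j = 0)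
       \<and> (d mod 8 \<in> {1, 2, 3, 4} \<longrightarrow> transpose_mat (Tmat d n p z j) = Tmat d n p z j)
       \<and> (d mod 8 \<notin> {1, 2, 3, 4} \<longrightarrow> transpose_mat (Tmat d n p z j) = - Tmat d n p z j))
    \<and> (\<forall>a\<in>{1..n}. \<forall>b\<in>{1..n}. (\<Sum>j = 1..n. br3 d p z a j b) = 0)"
proof -
  interpret dirac_dim d
    using assms(1) by unfold_locales
  have null: "mdot d (p i) (p i) = 0" if "i \<in> {1..n}" for i
    using assms(4) that by (simp add: in_V_def)
  have spinor: "z i \<in> carrier_vec N" if "i \<in> {1..n}" for i
    using assms(3,5) that by (auto intro: carrier_vecI)
  have "mrank n (Smat d n p z) \<le> 2 ^ k"
    unfolding assms(3) by (rule rank_Smat)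
  moreover have "\<forall>i\<in>{1..n}. br2 d p z i i = 0"
    by (intro ballI br2_diag null spinor)
  moreover have "transpose_mat (Smat d n p z) = (if k mod 4 \<in> {0, 3} then Smat d n p z else - Smat d n p z)"
    using transpose_Smat by (simp add: assms(3) charge_conj_sign_def uminus_eq_smult_mat)
  moreover have "\<forall>j\<in>{1..n}. mrank n (Tmat d n p z j) \<le> 2 ^ (k - 1)"
    unfolding assms(3) by (intro ballI rank_Tmat null)
  moreover have "\<forall>j\<in>{1..n}. \<forall>i\<in>{1..n}. br3 d p z j j i = 0 \<and> br3 d p z i j j = 0"
    by (intro ballI conjI br3_diag_left br3_diag_right null spinor)
  moreover have "transpose_mat (Tmat d n p z j) =
      (if d mod 8 \<in> {1, 2, 3, 4} then Tmat d n p z j else - Tmat d n p z j)" for j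
    using transpose_Tmat by (simp add: charge_conj_sign_mult_dirac_transpose_sign uminus_eq_smult_mat)
  moreover have "\<forall>a\<in>{1..n}. \<forall>b\<in>{1..n}. (\<Sum>j = 1..n. br3 d p z a j b) = 0"
    using sum_br3_eq_zero[OF assms(4)] by blast
  ultimately show ?thesis
    by simp
qed

end
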